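(* Let $F\colon\mathbf{A}\to\mathbf{B}$ be a lens, and let $\bar J_1,\bar J_2\colon\mathbf{B}\to\mathbf{C}$ be the cokernel pair of the get functor $UF$ in $\mathbf{Cat}$ (i.e. the two injections of the pushout of $UF$ along itself). Then $\bar J_1$ and $\bar J_2$ are cosieves, and the unique lenses $J_1$ and $J_2$ whose get functors are $\bar J_1$ and $\bar J_2$ satisfy $J_1\circ F=J_2\circ F$ in $\mathbf{Lens}$.
   Context: A lens $F\colon \mathbf{A}\to\mathbf{B}$ between small categories consists of a functor $F\colon\mathbf{A}\to\mathbf{B}$ (the get functor) together with, for each object $A$ of $\mathbf{A}$, a function $\varphi_{F,A}$ from the set of morphisms of $\mathbf{B}$ with domain $FA$ to the set of morphisms of $\mathbf{A}$ with domain $A$, such that: $F(\varphi_{F,A}b)=b$; $\varphi_{F,A}(\mathrm{id}_{FA})=\mathrm{id}_A$; and $\varphi_{F,A}(b'\circ b)=\varphi_{F,A'}(b')\circ\varphi_{F,A}(b)$ whenever $b$ has domain $FA$, $A'$ is the codomain of $\varphi_{F,A}b$, and $b'$ has domain $FA'$. $\mathbf{Lens}$ is the category of small categories and lenses, with composite of $F\colon\mathbf{A}\to\mathbf{B}$, $G\colon\mathbf{B}\to\mathbf{C}$ having get functor $G\circ F$ and puts $\varphi_{G\circ F,A}(c)=\varphi_{F,A}(\varphi_{G,FA}(c))$. $U\colon\mathbf{Lens}\to\mathbf{Cat}$ sends a lens to its get functor. A functor $F\colon\mathbf{A}\to\mathbf{B}$ is a discrete opfibration if for each object $A$ and each morphism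 $b$ of $\mathbf{B}$ with domain $FA$ there is a unique morphism $a$ of $\mathbf{A}$ with domain $A$ and $Fa=b$; a discrete opfibration has exactly one lens structure (puts given by these unique lifts). A cosieve is an injective-on-objects discrete opfibration. *)

theory Defs
  imports Main
begin

text \<open>Small categories, represented by carrier sets of objects and morphisms
 with domain, codomain, identity and composition operations
 (composition written in applicative order: cComp C g f = g after f).\<close>

record ('o, 'a) cat =
  cObj  :: "'o set"
  cArr  :: "'a set"
  cDom  :: "'a \<Rightarrow> 'o"
  cCod  :: "'a \<Rightarrow> 'o"
  cId   :: "'o \<Rightarrow> 'a"
  cComp :: "'a \<Rightarrow> 'a \<Rightarrow> 'a"

definition is_cat :: "('o, 'a) cat \<Rightarrow> bool" where
  "is_cat C \<longleftrightarrow>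
     (\<forall>f\<in>cArr C. cDom C f \<in> cObj C \<and> cCod C f \<in> cObj C) \<and>
     (\<forall>x\<in>cObj C. cId C x \<in> cArr C \<and> cDom C (cId C x) = x \<and> cCod C (cId C x) = x) \<and>
     (\<forall>f\<in>cArr C. \<forall>g\<in>cArr C. cCod C f = cDom C g \<longrightarrow>
         cComp C g f \<in> cArr C \<and> cDom C (cComp C g f) = cDom C f \<and> cCod C (cComp C g f) = cCod C g) \<and>
     (\<forall>f\<in>cArr C. cComp C f (cId C (cDom C f)) = f \<and> cComp C (cId C (cCod C f)) f = f) \<and>
     (\<forall>f\<in>cArr C. \<forall>g\<in>cArr C. \<forall>h\<in>cArr C. cCod C f = cDom C g \<longrightarrow> cCod C g = cDom C h \<longrightarrow>
         cComp C h (cComp C g f) = cComp C (cComp C h g) f)"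

text \<open>A functor is given by an object map and a morphism map (only their values on
 the carriers matter).\<close>

definition is_functor :: "('o1, 'a1) cat \<Rightarrow> ('o2, 'a2) cat \<Rightarrow> ('o1 \<Rightarrow> 'o2) \<Rightarrow> ('a1 \<Rightarrow> 'a2) \<Rightarrow> bool" where
  "is_functor C D fo fa \<longleftrightarrow> is_cat C \<and> is_cat D \<and>
     fo ` cObj C \<subseteq> cObj D \<and> fa ` cArr C \<subseteq> cArr D \<and>
     (\<forall>f\<in>cArr C. cDom D (fa f) = fo (cDom C f) \<and> cCod D (fa f) = fo (cCod C f)) \<and>
     (\<forall>x\<in>cObj C. fa (cId C x) = cId D (fo x)) \<and>
     (\<forall>f\<in>cArr C. \<forall>g\<in>cArr C. cCod C f = cDom C g \<longrightarrow> fa (cComp C g f) = cComp D (fa g) (fa f))"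

definition functors_agree :: "('o1, 'a1) cat \<Rightarrow> ('o1 \<Rightarrow> 'o2) \<Rightarrow> ('a1 \<Rightarrow> 'a2) \<Rightarrow> ('o1 \<Rightarrow> 'o2) \<Rightarrow> ('a1 \<Rightarrow> 'a2) \<Rightarrow> bool" where
  "functors_agree C fo fa go ga \<longleftrightarrow> (\<forall>x\<in>cObj C. fo x = go x) \<and> (\<forall>f\<in>cArr C. fa f = ga f)"

text \<open>A lens A \<rightarrow> B: get functor (fo, fa) together with puts p x b (for x an object
 of A and b a morphism of B with domain fo x).\<close>

definition is_lens :: "('o1, 'a1) cat \<Rightarrow> ('o2, 'a2) cat \<Rightarrow> ('o1 \<Rightarrow> 'o2) \<Rightarrow> ('a1 \<Rightarrow> 'a2)
                        \<Rightarrow> ('o1 \<Rightarrow> 'a2 \<Rightarrow> 'a1) \<Rightarrow> bool" where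
  "is_lens A B fo fa p \<longleftrightarrow> is_functor A B fo fa \<and>
     (\<forall>x\<in>cObj A. \<forall>b\<in>cArr B. cDom B b = fo x \<longrightarrow>
        p x b \<in> cArr A \<and> cDom A (p x b) = x \<and> fa (p x b) = b) \<and>
     (\<forall>x\<in>cObj A. p x (cId B (fo x)) = cId A x) \<and>
     (\<forall>x\<in>cObj A. \<forall>b\<in>cArr B. \<forall>b'\<in>cArr B. cDom B b = fo x \<longrightarrow> cDom B b' = fo (cCod A (p x b)) \<longrightarrow>
        p x (cComp B b' b) = cComp A (p (cCod A (p x b)) b') (p x b))"

definition lens_comp_put :: "('o1 \<Rightarrow> 'o2) \<Rightarrow> ('o1 \<Rightarrow> 'a2 \<Rightarrow> 'a1) \<Rightarrow> ('o2 \<Rightarrow> 'a3 \<Rightarrow> 'a2) \<Rightarrow> ('o1 \<Rightarrow> 'a3 \<Rightarrow> 'a1)" where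
  "lens_comp_put Fo pF pG = (\<lambda>x c. pF x (pG (Fo x) c))"

definition lenses_eq :: "('o1, 'a1) cat \<Rightarrow> ('o2, 'a2) cat
     \<Rightarrow> ('o1 \<Rightarrow> 'o2) \<Rightarrow> ('a1 \<Rightarrow> 'a2) \<Rightarrow> ('o1 \<Rightarrow> 'a2 \<Rightarrow> 'a1)
     \<Rightarrow> ('o1 \<Rightarrow> 'o2) \<Rightarrow> ('a1 \<Rightarrow> 'a2) \<Rightarrow> ('o1 \<Rightarrow> 'a2 \<Rightarrow> 'a1) \<Rightarrow> bool" where
  "lenses_eq A B fo fa p go ga q \<longleftrightarrow> functors_agree A fo fa go ga \<and>
     (\<forall>x\<in>cObj A. \<forall>b\<in>cArr B. cDom B b = fo x \<longrightarrow> p x b = q x b)"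

definition discrete_opfibration :: "('o1, 'a1) cat \<Rightarrow> ('o2, 'a2) cat \<Rightarrow> ('o1 \<Rightarrow> 'o2) \<Rightarrow> ('a1 \<Rightarrow> 'a2) \<Rightarrow> bool" where
  "discrete_opfibration A B fo fa \<longleftrightarrow> is_functor A B fo fa \<and>
     (\<forall>x\<in>cObj A. \<forall>b\<in>cArr B. cDom B b = fo x \<longrightarrow> (\<exists>!a. a \<in> cArr A \<and> cDom A a = x \<and> fa a = b))"

definition cosieve :: "('o1, 'a1) cat \<Rightarrow> ('o2, 'a2) cat \<Rightarrow> ('o1 \<Rightarrow> 'o2) \<Rightarrow> ('a1 \<Rightarrow> 'a2) \<Rightarrow> bool" where
  "cosieve A B fo fa \<longleftrightarrow> discrete_opfibration A B fo fa \<and> inj_on fo (cObj A)"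

definition pushout_univ_for ::
  "('oa, 'aa) cat \<Rightarrow> ('ob, 'ab) cat \<Rightarrow> ('oc, 'ac) cat \<Rightarrow> ('ox, 'ax) cat
   \<Rightarrow> ('oa \<Rightarrow> 'ob) \<Rightarrow> ('aa \<Rightarrow> 'ab)
   \<Rightarrow> ('ob \<Rightarrow> 'oc) \<Rightarrow> ('ab \<Rightarrow> 'ac) \<Rightarrow> ('ob \<Rightarrow> 'oc) \<Rightarrow> ('ab \<Rightarrow> 'ac) \<Rightarrow> bool" where
  "pushout_univ_for A B C D Fo Fa J1o J1a J2o J2a \<longleftrightarrow>
     (\<forall>K1o K1a K2o K2a.
        is_functor B D K1o K1a \<and> is_functor B D K2o K2a \<and>
        functors_agree A (K1o \<circ> Fo) (K1a \<circ> Fa) (K2o \<circ> Fo) (K2a \<circ> Fa) \<longrightarrow>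
        (\<exists>Ho Ha. is_functor C D Ho Ha \<and>
           functors_agree B (Ho \<circ> J1o) (Ha \<circ> J1a) K1o K1a \<and>
           functors_agree B (Ho \<circ> J2o) (Ha \<circ> J2a) K2o K2a \<and>
           (\<forall>Ho' Ha'. is_functor C D Ho' Ha' \<and>
              functors_agree B (Ho' \<circ> J1o) (Ha' \<circ> J1a) K1o K1a \<and>
              functors_agree B (Ho' \<circ> J2o) (Ha' \<circ> J2a) K2o K2a \<longrightarrow>
              functors_agree C Ho Ha Ho' Ha')))"

text \<open>Since HOL cannot quantify over all types inside a formula, the universal property is
 required against all test categories whose carriers live in C's own types and in the
 types (('ob + 'ob) set, ('ab + 'ab) list set), which are large enough to host the
 standard construction of the pushout (quotients of the coproduct, paths of morphisms).
 Universality against both classes forces C to be isomorphic (under B) to the genuine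
 pushout in Cat, so this is equivalent to the usual notion.\<close>

definition is_cokernel_pair ::
  "('oa, 'aa) cat \<Rightarrow> ('ob, 'ab) cat \<Rightarrow> ('oc, 'ac) cat
   \<Rightarrow> ('oa \<Rightarrow> 'ob) \<Rightarrow> ('aa \<Rightarrow> 'ab)
   \<Rightarrow> ('ob \<Rightarrow> 'oc) \<Rightarrow> ('ab \<Rightarrow> 'ac) \<Rightarrow> ('ob \<Rightarrow> 'oc) \<Rightarrow> ('ab \<Rightarrow> 'ac) \<Rightarrow> bool" where
  "is_cokernel_pair A B C Fo Fa J1o J1a J2o J2a \<longleftrightarrow>
     is_functor A B Fo Fa \<and> is_functor B C J1o J1a \<and> is_functor B C J2o J2a \<and>
     functors_agree A (J1o \<circ> Fo) (J1a \<circ> Fa) (J2o \<circ> Fo) (J2a \<circ> Fa) \<and>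
     (\<forall>D :: ('oc, 'ac) cat. pushout_univ_for A B C D Fo Fa J1o J1a J2o J2a) \<and>
     (\<forall>D :: (('ob + 'ob) set, ('ab + 'ab) list set) cat.
        pushout_univ_for A B C D Fo Fa J1o J1a J2o J2a)"

end

theory Submission
  imports Defs
begin

(* The image S of the get functor of a lens F is upward closed in B, since every arrow of B
   out of an object F x lifts along F.  Gluing two copies of B along the full subcategory on S
   therefore yields a category in which both copies are cosieves and an arrow of one copy
   equals an arrow of the other only if both come from the same arrow of B.  The universal
   property of the cokernel pair gives a comparison functor H from C into this gluing, and its
   uniqueness part shows that the copairing of J1 and J2 is left inverse to H.  So H is
   injective on arrows; J1 and J2 inherit the cosieve property from the two copies, and
   J1 b = J2 b' forces b = b', which makes the puts of J1 \<circ> F and J2 \<circ> F coincide. *)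

lemma is_catD:
  assumes "is_cat C"
  shows "\<And>f. f \<in> cArr C \<Longrightarrow> cDom C f \<in> cObj C"
    "\<And>f. f \<in> cArr C \<Longrightarrow> cCod C f \<in> cObj C"
    "\<And>x. x \<in> cObj C \<Longrightarrow> cId C x \<in> cArr C"
    "\<And>x. x \<in> cObj C \<Longrightarrow> cDom C (cId C x) = x"
    "\<And>x. x \<in> cObj C \<Longrightarrow> cCod C (cId C x) = x"
    "\<And>f g. f \<in> cArr C \<Longrightarrow> g \<in> cArr C \<Longrightarrow> cCod C f = cDom C g \<Longrightarrow> cComp C g f \<in> cArr C"
    "\<And>f g. f \<in> cArr C \<Longrightarrow> g \<in> cArr C \<Longrightarrow> cCod C f = cDom C g \<Longrightarrow> cDom C (cComp C g f) = cDom C f"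
    "\<And>f g. f \<in> cArr C \<Longrightarrow> g \<in> cArr C \<Longrightarrow> cCod C f = cDom C g \<Longrightarrow> cCod C (cComp C g f) = cCod C g"
    "\<And>f. f \<in> cArr C \<Longrightarrow> cComp C f (cId C (cDom C f)) = f"
    "\<And>f. f \<in> cArr C \<Longrightarrow> cComp C (cId C (cCod C f)) f = f"
    "\<And>f g h. f \<in> cArr C \<Longrightarrow> g \<in> cArr C \<Longrightarrow> h \<in> cArr C \<Longrightarrow> cCod C f = cDom C g \<Longrightarrow>
       cCod C g = cDom C h \<Longrightarrow> cComp C h (cComp C g f) = cComp C (cComp C h g) f"
  using assms unfolding is_cat_def by blast+

lemma is_functorD:
  assumes "is_functor C D fo fa"
  shows "is_cat C" "is_cat D" "\<And>x. x \<in> cObj C \<Longrightarrow> fo x \<in> cObj D"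
    "\<And>f. f \<in> cArr C \<Longrightarrow> fa f \<in> cArr D"
    "\<And>f. f \<in> cArr C \<Longrightarrow> cDom D (fa f) = fo (cDom C f)"
    "\<And>f. f \<in> cArr C \<Longrightarrow> cCod D (fa f) = fo (cCod C f)"
    "\<And>x. x \<in> cObj C \<Longrightarrow> fa (cId C x) = cId D (fo x)"
    "\<And>f g. f \<in> cArr C \<Longrightarrow> g \<in> cArr C \<Longrightarrow> cCod C f = cDom C g \<Longrightarrow>
       fa (cComp C g f) = cComp D (fa g) (fa f)"
  using assms unfolding is_functor_def by blast+

lemma id_is_functor: "is_cat C \<Longrightarrow> is_functor C C id id"
  unfolding is_functor_def by auto

lemma comp_is_functor:
  assumes F: "is_functor C D fo fa" and G: "is_functor D E go ga"
  shows "is_functor C E (go \<circ> fo) (ga \<circ> fa)"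
  unfolding is_functor_def
proof (intro conjI ballI impI image_subsetI)
  show "is_cat C" "is_cat E" using is_functorD(1)[OF F] is_functorD(2)[OF G] .
next
  fix x assume "x \<in> cObj C"
  then show "(go \<circ> fo) x \<in> cObj E" using is_functorD(3)[OF F] is_functorD(3)[OF G] by simp
next
  fix f assume "f \<in> cArr C"
  then show "(ga \<circ> fa) f \<in> cArr E" using is_functorD(4)[OF F] is_functorD(4)[OF G] by simp
next
  fix f assume "f \<in> cArr C"
  then show "cDom E ((ga \<circ> fa) f) = (go \<circ> fo) (cDom C f)"
    and "cCod E ((ga \<circ> fa) f) = (go \<circ> fo) (cCod C f)"
    using is_functorD(4-6)[OF F] is_functorD(5,6)[OF G] by simp_all
next
  fix x assume "x \<in> cObj C"
  then show "(ga \<circ> fa) (cId C x) = cId E ((go \<circ> fo) x)"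
    using is_functorD(3,7)[OF F] is_functorD(7)[OF G] by simp
next
  fix f g assume "f \<in> cArr C" "g \<in> cArr C" "cCod C f = cDom C g"
  then show "(ga \<circ> fa) (cComp C g f) = cComp E ((ga \<circ> fa) g) ((ga \<circ> fa) f)"
    using is_functorD(4-6,8)[OF F] is_functorD(8)[OF G] by simp
qed

lemma is_lens_is_functor: "is_lens A B Fo Fa p \<Longrightarrow> is_functor A B Fo Fa"
  unfolding is_lens_def by blast

lemma is_lens_putD:
  assumes "is_lens A B Fo Fa p" "x \<in> cObj A" "b \<in> cArr B" "cDom B b = Fo x"
  shows "p x b \<in> cArr A" "cDom A (p x b) = x" "Fa (p x b) = b"
  using assms unfolding is_lens_def by blast+

lemma cosieve_if_comp_cosieve:
  assumes J: "is_functor B C Jo Ja" and H: "is_functor C D Ho Ha" and inj: "inj_on Ha (cArr C)"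
    and HJ: "functors_agree B (Ho \<circ> Jo) (Ha \<circ> Ja) Ko Ka" and K: "cosieve B D Ko Ka"
  shows "cosieve B C Jo Ja"
  unfolding cosieve_def discrete_opfibration_def
proof (intro conjI ballI impI J)
  have HJo: "\<And>y. y \<in> cObj B \<Longrightarrow> Ho (Jo y) = Ko y" and HJa: "\<And>b. b \<in> cArr B \<Longrightarrow> Ha (Ja b) = Ka b"
    using HJ unfolding functors_agree_def by simp_all
  fix x c assume x: "x \<in> cObj B" and c: "c \<in> cArr C" and dc: "cDom C c = Jo x"
  have "cDom D (Ha c) = Ko x" using is_functorD(5)[OF H c] dc HJo[OF x] by simp
  then obtain b where b: "b \<in> cArr B" "cDom B b = x" "Ka b = Ha c"
    and b_unique: "\<And>b'. b' \<in> cArr B \<Longrightarrow> cDom B b' = x \<Longrightarrow> Ka b' = Ha c \<Longrightarrow> b' = b"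
    using K x is_functorD(4)[OF H c] unfolding cosieve_def discrete_opfibration_def by metis
  have "Ja b = c"
    using inj_onD[OF inj _ is_functorD(4)[OF J b(1)] c] HJa b by simp
  moreover have "b' = b" if "b' \<in> cArr B" "cDom B b' = x" "Ja b' = c" for b'
    using b_unique[OF that(1,2)] HJa[OF that(1)] that(3) by simp
  ultimately show "\<exists>!b. b \<in> cArr B \<and> cDom B b = x \<and> Ja b = c" using b by blast
next
  show "inj_on Jo (cObj B)"
    using K HJ unfolding cosieve_def functors_agree_def inj_on_def by (metis comp_apply)
qed

lemma lenses_eq_compI:
  assumes F: "is_functor A B Fo Fa"
    and agree: "functors_agree A (J1o \<circ> Fo) (J1a \<circ> Fa) (J2o \<circ> Fo) (J2a \<circ> Fa)"
    and p1: "is_lens B C J1o J1a p1" and p2: "is_lens B C J2o J2a p2"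
    and jointly_inj: "\<And>b b'. b \<in> cArr B \<Longrightarrow> b' \<in> cArr B \<Longrightarrow> J1a b = J2a b' \<Longrightarrow> b = b'"
  shows "lenses_eq A C (J1o \<circ> Fo) (J1a \<circ> Fa) (lens_comp_put Fo pF p1)
                       (J2o \<circ> Fo) (J2a \<circ> Fa) (lens_comp_put Fo pF p2)"
  unfolding lenses_eq_def
proof (intro conjI ballI impI agree)
  fix x c assume x: "x \<in> cObj A" and c: "c \<in> cArr C" and dc: "cDom C c = (J1o \<circ> Fo) x"
  have Fx: "Fo x \<in> cObj B" using is_functorD(3)[OF F x] .
  have dc2: "cDom C c = J2o (Fo x)" using dc agree x unfolding functors_agree_def by simp
  have "p1 (Fo x) c \<in> cArr B" "J1a (p1 (Fo x) c) = c"
    using is_lens_putD(1,3)[OF p1 Fx c] dc by simp_all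
  moreover have "p2 (Fo x) c \<in> cArr B" "J2a (p2 (Fo x) c) = c"
    using is_lens_putD(1,3)[OF p2 Fx c dc2] by simp_all
  ultimately have "p1 (Fo x) c = p2 (Fo x) c" using jointly_inj by metis
  then show "lens_comp_put Fo pF p1 x c = lens_comp_put Fo pF p2 x c"
    unfolding lens_comp_put_def by simp
qed

lemma is_cokernel_pairD:
  assumes "is_cokernel_pair A B C Fo Fa J1o J1a J2o J2a"
  shows "is_functor B C J1o J1a" "is_functor B C J2o J2a"
    "functors_agree A (J1o \<circ> Fo) (J1a \<circ> Fa) (J2o \<circ> Fo) (J2a \<circ> Fa)"
  using assms unfolding is_cokernel_pair_def by blast+

lemma pushout_univ_forE:
  assumes "pushout_univ_for A B C D Fo Fa J1o J1a J2o J2a"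
    and "is_functor B D K1o K1a" "is_functor B D K2o K2a"
    and "functors_agree A (K1o \<circ> Fo) (K1a \<circ> Fa) (K2o \<circ> Fo) (K2a \<circ> Fa)"
  obtains Ho Ha where "is_functor C D Ho Ha"
    "functors_agree B (Ho \<circ> J1o) (Ha \<circ> J1a) K1o K1a"
    "functors_agree B (Ho \<circ> J2o) (Ha \<circ> J2a) K2o K2a"
    "\<And>Ho' Ha'. is_functor C D Ho' Ha' \<Longrightarrow>
       functors_agree B (Ho' \<circ> J1o) (Ha' \<circ> J1a) K1o K1a \<Longrightarrow>
       functors_agree B (Ho' \<circ> J2o) (Ha' \<circ> J2a) K2o K2a \<Longrightarrow>
       functors_agree C Ho Ha Ho' Ha'"
  using assms unfolding pushout_univ_for_def by blast

lemma pushout_univ_for_endo_agrees_id: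
  assumes univ: "pushout_univ_for A B C C Fo Fa J1o J1a J2o J2a"
    and J1: "is_functor B C J1o J1a" and J2: "is_functor B C J2o J2a"
    and agree: "functors_agree A (J1o \<circ> Fo) (J1a \<circ> Fa) (J2o \<circ> Fo) (J2a \<circ> Fa)"
    and H: "is_functor C C Ho Ha"
    and HJ1: "functors_agree B (Ho \<circ> J1o) (Ha \<circ> J1a) J1o J1a"
    and HJ2: "functors_agree B (Ho \<circ> J2o) (Ha \<circ> J2a) J2o J2a"
  shows "functors_agree C Ho Ha id id"
proof -
  obtain H0o H0a where unique: "\<And>Ho' Ha'. is_functor C C Ho' Ha' \<Longrightarrow>
       functors_agree B (Ho' \<circ> J1o) (Ha' \<circ> J1a) J1o J1a \<Longrightarrow>
       functors_agree B (Ho' \<circ> J2o) (Ha' \<circ> J2a) J2o J2a \<Longrightarrow>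
       functors_agree C H0o H0a Ho' Ha'"
    by (rule pushout_univ_forE[OF univ J1 J2 agree]) blast
  have "functors_agree C H0o H0a id id"
    by (rule unique[OF id_is_functor[OF is_functorD(2)[OF J1]]]) (simp_all add: functors_agree_def)
  moreover have "functors_agree C H0o H0a Ho Ha" using unique[OF H HJ1 HJ2] .
  ultimately show ?thesis unfolding functors_agree_def by simp
qed

definition upward_closed :: "('o, 'a) cat \<Rightarrow> 'o set \<Rightarrow> bool" where
  "upward_closed B S \<longleftrightarrow> (\<forall>b\<in>cArr B. cDom B b \<in> S \<longrightarrow> cCod B b \<in> S)"

lemma upward_closedD: "upward_closed B S \<Longrightarrow> b \<in> cArr B \<Longrightarrow> cDom B b \<in> S \<Longrightarrow> cCod B b \<in> S"
  unfolding upward_closed_def by blast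

lemma lens_image_upward_closed:
  assumes lens: "is_lens A B Fo Fa p"
  shows "upward_closed B (Fo ` cObj A)"
  unfolding upward_closed_def
proof (intro ballI impI)
  note F = is_lens_is_functor[OF lens]
  fix b assume b: "b \<in> cArr B" and "cDom B b \<in> Fo ` cObj A"
  then obtain x where x: "x \<in> cObj A" "cDom B b = Fo x" by auto
  have "cCod B b = Fo (cCod A (p x b))"
    using is_functorD(6)[OF F] is_lens_putD[OF lens x(1) b x(2)] by metis
  then show "cCod B b \<in> Fo ` cObj A"
    using is_catD(2)[OF is_functorD(1)[OF F] is_lens_putD(1)[OF lens x(1) b x(2)]] by blast
qed

lemma lens_coequalized_agree_on_image:
  assumes lens: "is_lens A B Fo Fa p"
    and agree: "functors_agree A (J1o \<circ> Fo) (J1a \<circ> Fa) (J2o \<circ> Fo) (J2a \<circ> Fa)"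
  shows "\<forall>y\<in>Fo ` cObj A. J1o y = J2o y"
    and "\<forall>b\<in>cArr B. cDom B b \<in> Fo ` cObj A \<longrightarrow> J1a b = J2a b"
proof -
  show "\<forall>y\<in>Fo ` cObj A. J1o y = J2o y" using agree unfolding functors_agree_def by auto
  show "\<forall>b\<in>cArr B. cDom B b \<in> Fo ` cObj A \<longrightarrow> J1a b = J2a b"
  proof (intro ballI impI)
    fix b assume b: "b \<in> cArr B" and "cDom B b \<in> Fo ` cObj A"
    then obtain x where x: "x \<in> cObj A" "cDom B b = Fo x" by auto
    show "J1a b = J2a b"
      using agree is_lens_putD[OF lens x(1) b x(2)] unfolding functors_agree_def by force
  qed
qed

(* Two copies of B, tagged Inl (s = True) and Inr (s = False), glued along the full subcategory
   on S.  An object is its class in the coproduct of the two object sets and an arrow the class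
   of the one-step path [b]: these carrier types are the ones against which is_cokernel_pair
   tests universality.  When S is upward closed, gluing the objects in S forces exactly the
   gluing of the arrows out of S. *)

definition glue_obj :: "'ob set \<Rightarrow> bool \<Rightarrow> 'ob \<Rightarrow> ('ob + 'ob) set" where
  "glue_obj S s y =
     (if s \<or> y \<in> S then {Inl y} else {}) \<union> (if \<not> s \<or> y \<in> S then {Inr y} else {})"

definition glue_arr :: "('ob, 'ab) cat \<Rightarrow> 'ob set \<Rightarrow> bool \<Rightarrow> 'ab \<Rightarrow> ('ab + 'ab) list set" where
  "glue_arr B S s b =
     (if s \<or> cDom B b \<in> S then {[Inl b]} else {}) \<union> (if \<not> s \<or> cDom B b \<in> S then {[Inr b]} else {})"

definition unglue_obj :: "('ob + 'ob) set \<Rightarrow> bool \<times> 'ob" where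
  "unglue_obj Y =
     (if \<exists>y. Inl y \<in> Y then (True, SOME y. Inl y \<in> Y) else (False, SOME y. Inr y \<in> Y))"

definition unglue_arr :: "('ab + 'ab) list set \<Rightarrow> bool \<times> 'ab" where
  "unglue_arr X =
     (if \<exists>b. [Inl b] \<in> X then (True, SOME b. [Inl b] \<in> X) else (False, SOME b. [Inr b] \<in> X))"

definition glue_cat :: "('ob, 'ab) cat \<Rightarrow> 'ob set \<Rightarrow> (('ob + 'ob) set, ('ab + 'ab) list set) cat" where
  "glue_cat B S =
     \<lparr>cObj = {glue_obj S s y | s y. y \<in> cObj B},
      cArr = {glue_arr B S s b | s b. b \<in> cArr B},
      cDom = (\<lambda>X. case unglue_arr X of (s, b) \<Rightarrow> glue_obj S s (cDom B b)),
      cCod = (\<lambda>X. case unglue_arr X of (s, b) \<Rightarrow> glue_obj S s (cCod B b)),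
      cId = (\<lambda>Y. case unglue_obj Y of (s, y) \<Rightarrow> glue_arr B S s (cId B y)),
      cComp = (\<lambda>X2 X1. case unglue_arr X1 of (s, f) \<Rightarrow> glue_arr B S s (cComp B (snd (unglue_arr X2)) f))\<rparr>"

lemma glue_obj_mem:
  "Inl z \<in> glue_obj S s y \<longleftrightarrow> z = y \<and> (s \<or> y \<in> S)"
  "Inr z \<in> glue_obj S s y \<longleftrightarrow> z = y \<and> (\<not> s \<or> y \<in> S)"
  unfolding glue_obj_def by auto

lemma glue_arr_mem:
  "[Inl z] \<in> glue_arr B S s b \<longleftrightarrow> z = b \<and> (s \<or> cDom B b \<in> S)"
  "[Inr z] \<in> glue_arr B S s b \<longleftrightarrow> z = b \<and> (\<not> s \<or> cDom B b \<in> S)"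
  unfolding glue_arr_def by auto

lemma unglue_glue_obj [simp]: "unglue_obj (glue_obj S s y) = (s \<or> y \<in> S, y)"
  unfolding unglue_obj_def glue_obj_mem by simp

lemma unglue_glue_arr [simp]: "unglue_arr (glue_arr B S s b) = (s \<or> cDom B b \<in> S, b)"
  unfolding unglue_arr_def glue_arr_mem by simp

lemma glue_obj_eq_iff: "glue_obj S s y = glue_obj S t z \<longleftrightarrow> y = z \<and> (s = t \<or> y \<in> S)"
proof
  assume "glue_obj S s y = glue_obj S t z"
  from arg_cong[where f = unglue_obj, OF this] show "y = z \<and> (s = t \<or> y \<in> S)" by auto
qed (auto simp: glue_obj_def)

lemma glue_arr_eq_iff: "glue_arr B S s b = glue_arr B S t c \<longleftrightarrow> b = c \<and> (s = t \<or> cDom B b \<in> S)"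
proof
  assume "glue_arr B S s b = glue_arr B S t c"
  from arg_cong[where f = unglue_arr, OF this] show "b = c \<and> (s = t \<or> cDom B b \<in> S)" by auto
qed (auto simp: glue_arr_def)

lemma glue_obj_absorb [simp]: "glue_obj S (s \<or> y \<in> S) y = glue_obj S s y"
  by (auto simp: glue_obj_eq_iff)

lemma glue_arr_absorb [simp]: "glue_arr B S (s \<or> cDom B b \<in> S) b = glue_arr B S s b"
  by (auto simp: glue_arr_eq_iff)

lemma glue_obj_tag_irrelevant: "y \<in> S \<Longrightarrow> glue_obj S s y = glue_obj S t y"
  by (simp add: glue_obj_eq_iff)

lemma glue_arr_tag_irrelevant: "cDom B b \<in> S \<Longrightarrow> glue_arr B S s b = glue_arr B S t b"
  by (simp add: glue_arr_eq_iff)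

lemma glue_cat_dom [simp]: "cDom (glue_cat B S) (glue_arr B S s b) = glue_obj S s (cDom B b)"
  unfolding glue_cat_def by simp

lemma glue_obj_in_glue_cat: "y \<in> cObj B \<Longrightarrow> glue_obj S s y \<in> cObj (glue_cat B S)"
  unfolding glue_cat_def by auto

lemma glue_arr_in_glue_cat: "b \<in> cArr B \<Longrightarrow> glue_arr B S s b \<in> cArr (glue_cat B S)"
  unfolding glue_cat_def by auto

lemma glue_cat_cod:
  assumes "upward_closed B S" "b \<in> cArr B"
  shows "cCod (glue_cat B S) (glue_arr B S s b) = glue_obj S s (cCod B b)"
proof -
  have "cCod (glue_cat B S) (glue_arr B S s b) = glue_obj S (s \<or> cDom B b \<in> S) (cCod B b)"
    unfolding glue_cat_def by simp
  also have "\<dots> = glue_obj S s (cCod B b)"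
    using upward_closedD[OF assms] by (auto simp: glue_obj_eq_iff)
  finally show ?thesis .
qed

lemma glue_cat_id:
  assumes "is_cat B" "y \<in> cObj B"
  shows "cId (glue_cat B S) (glue_obj S s y) = glue_arr B S s (cId B y)"
  using is_catD(4)[OF assms] glue_arr_absorb[of B S s "cId B y"] unfolding glue_cat_def by simp

lemma glue_cat_comp:
  assumes "is_cat B" "f \<in> cArr B" "g \<in> cArr B" "cCod B f = cDom B g"
  shows "cComp (glue_cat B S) (glue_arr B S t g) (glue_arr B S s f) = glue_arr B S s (cComp B g f)"
  using is_catD(7)[OF assms] glue_arr_absorb[of B S s "cComp B g f"] unfolding glue_cat_def by simp

lemma glue_cat_arrE:
  assumes "X \<in> cArr (glue_cat B S)"
  obtains s b where "X = glue_arr B S s b" "b \<in> cArr B"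
  using assms unfolding glue_cat_def by auto

lemma glue_cat_objE:
  assumes "Y \<in> cObj (glue_cat B S)"
  obtains s y where "Y = glue_obj S s y" "y \<in> cObj B"
  using assms unfolding glue_cat_def by auto

lemma glue_cat_composableE:
  assumes up: "upward_closed B S" and "X1 \<in> cArr (glue_cat B S)" "X2 \<in> cArr (glue_cat B S)"
    and X12: "cCod (glue_cat B S) X1 = cDom (glue_cat B S) X2"
  obtains s f g where "X1 = glue_arr B S s f" "X2 = glue_arr B S s g"
    "f \<in> cArr B" "g \<in> cArr B" "cCod B f = cDom B g"
proof -
  obtain s f where X1: "X1 = glue_arr B S s f" "f \<in> cArr B" using assms(2) by (rule glue_cat_arrE)
  obtain t g where X2: "X2 = glue_arr B S t g" "g \<in> cArr B" using assms(3) by (rule glue_cat_arrE)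
  have "glue_obj S s (cCod B f) = glue_obj S t (cDom B g)"
    using X12 X1 X2 glue_cat_cod[OF up X1(2)] by simp
  then have "cCod B f = cDom B g" "glue_arr B S t g = glue_arr B S s g"
    unfolding glue_obj_eq_iff glue_arr_eq_iff by auto
  then show thesis using that X1 X2 by simp
qed

lemma glue_cat_arr_laws:
  assumes B: "is_cat B" and up: "upward_closed B S" and "X \<in> cArr (glue_cat B S)"
  shows "cDom (glue_cat B S) X \<in> cObj (glue_cat B S)" "cCod (glue_cat B S) X \<in> cObj (glue_cat B S)"
    "cComp (glue_cat B S) X (cId (glue_cat B S) (cDom (glue_cat B S) X)) = X"
    "cComp (glue_cat B S) (cId (glue_cat B S) (cCod (glue_cat B S) X)) X = X"
proof -
  let ?G = "glue_cat B S"
  obtain s b where X: "X = glue_arr B S s b" "b \<in> cArr B" using assms(3) by (rule glue_cat_arrE)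
  note ends = is_catD(1,2)[OF B X(2)]
  have dom: "cDom ?G X = glue_obj S s (cDom B b)" and cod: "cCod ?G X = glue_obj S s (cCod B b)"
    using X glue_cat_cod[OF up] by simp_all
  then show "cDom ?G X \<in> cObj ?G" "cCod ?G X \<in> cObj ?G"
    using ends by (simp_all add: glue_obj_in_glue_cat)
  have "cComp ?G X (cId ?G (cDom ?G X)) = glue_arr B S s (cComp B b (cId B (cDom B b)))"
    using X dom glue_cat_id[OF B ends(1)]
      glue_cat_comp[OF B is_catD(3)[OF B ends(1)] X(2) is_catD(5)[OF B ends(1)]] by simp
  then show "cComp ?G X (cId ?G (cDom ?G X)) = X"
    using X is_catD(9)[OF B X(2)] by simp
  have "cComp ?G (cId ?G (cCod ?G X)) X = glue_arr B S s (cComp B (cId B (cCod B b)) b)"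
    using X cod glue_cat_id[OF B ends(2)]
      glue_cat_comp[OF B X(2) is_catD(3)[OF B ends(2)] is_catD(4)[OF B ends(2), symmetric]] by simp
  then show "cComp ?G (cId ?G (cCod ?G X)) X = X"
    using X is_catD(10)[OF B X(2)] by simp
qed

lemma glue_cat_id_laws:
  assumes B: "is_cat B" and up: "upward_closed B S" and "Y \<in> cObj (glue_cat B S)"
  shows "cId (glue_cat B S) Y \<in> cArr (glue_cat B S)"
    "cDom (glue_cat B S) (cId (glue_cat B S) Y) = Y" "cCod (glue_cat B S) (cId (glue_cat B S) Y) = Y"
proof -
  obtain s y where Y: "Y = glue_obj S s y" "y \<in> cObj B" using assms(3) by (rule glue_cat_objE)
  have "cId (glue_cat B S) Y = glue_arr B S s (cId B y)" using Y glue_cat_id[OF B] by simp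
  then show "cId (glue_cat B S) Y \<in> cArr (glue_cat B S)"
    "cDom (glue_cat B S) (cId (glue_cat B S) Y) = Y" "cCod (glue_cat B S) (cId (glue_cat B S) Y) = Y"
    using Y is_catD(3-5)[OF B Y(2)] glue_cat_cod[OF up is_catD(3)[OF B Y(2)]]
    by (simp_all add: glue_arr_in_glue_cat)
qed

lemma glue_cat_comp_laws:
  assumes B: "is_cat B" and up: "upward_closed B S"
    and "X1 \<in> cArr (glue_cat B S)" "X2 \<in> cArr (glue_cat B S)"
    and "cCod (glue_cat B S) X1 = cDom (glue_cat B S) X2"
  shows "cComp (glue_cat B S) X2 X1 \<in> cArr (glue_cat B S)"
    "cDom (glue_cat B S) (cComp (glue_cat B S) X2 X1) = cDom (glue_cat B S) X1"
    "cCod (glue_cat B S) (cComp (glue_cat B S) X2 X1) = cCod (glue_cat B S) X2"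
proof -
  let ?G = "glue_cat B S"
  obtain s f g where X: "X1 = glue_arr B S s f" "X2 = glue_arr B S s g"
    and fg: "f \<in> cArr B" "g \<in> cArr B" "cCod B f = cDom B g"
    using glue_cat_composableE[OF up assms(3-5)] .
  have comp: "cComp ?G X2 X1 = glue_arr B S s (cComp B g f)"
    using X glue_cat_comp[OF B fg] by simp
  then show "cComp ?G X2 X1 \<in> cArr ?G"
    using is_catD(6)[OF B fg] by (simp add: glue_arr_in_glue_cat)
  show "cDom ?G (cComp ?G X2 X1) = cDom ?G X1"
    using comp X is_catD(7)[OF B fg] by simp
  show "cCod ?G (cComp ?G X2 X1) = cCod ?G X2"
    using comp X is_catD(6,8)[OF B fg] glue_cat_cod[OF up] fg(2) by simp
qed

lemma glue_cat_comp_assoc: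
  assumes B: "is_cat B" and up: "upward_closed B S"
    and X: "X1 \<in> cArr (glue_cat B S)" "X2 \<in> cArr (glue_cat B S)" "X3 \<in> cArr (glue_cat B S)"
    and X12: "cCod (glue_cat B S) X1 = cDom (glue_cat B S) X2"
    and X23: "cCod (glue_cat B S) X2 = cDom (glue_cat B S) X3"
  shows "cComp (glue_cat B S) X3 (cComp (glue_cat B S) X2 X1) =
    cComp (glue_cat B S) (cComp (glue_cat B S) X3 X2) X1" (is "?lhs = ?rhs")
proof -
  obtain s f g where X12': "X1 = glue_arr B S s f" "X2 = glue_arr B S s g"
    and fg: "f \<in> cArr B" "g \<in> cArr B" "cCod B f = cDom B g"
    using glue_cat_composableE[OF up X(1,2) X12] .
  obtain t g' h where X23': "X2 = glue_arr B S t g'" "X3 = glue_arr B S t h"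
    and gh': "g' \<in> cArr B" "h \<in> cArr B" "cCod B g' = cDom B h"
    using glue_cat_composableE[OF up X(2,3) X23] .
  have "g' = g" using X12'(2) X23'(1) by (simp add: glue_arr_eq_iff)
  then have gh: "g \<in> cArr B" "h \<in> cArr B" "cCod B g = cDom B h" using gh' by simp_all
  have "?lhs = glue_arr B S s (cComp B h (cComp B g f))"
    using X12' X23'(2) glue_cat_comp[OF B fg] glue_cat_comp[OF B _ gh(2)] is_catD(6,8)[OF B fg] gh(3)
    by simp
  also have "\<dots> = glue_arr B S s (cComp B (cComp B h g) f)"
    using is_catD(11)[OF B fg(1,2) gh(2) fg(3) gh(3)] by simp
  also have "\<dots> = ?rhs"
    using X12' X23' \<open>g' = g\<close> glue_cat_comp[OF B gh] glue_cat_comp[OF B fg(1)] is_catD(6,7)[OF B gh] fg(3)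
    by simp
  finally show ?thesis .
qed

lemma glue_cat_is_cat:
  assumes "is_cat B" "upward_closed B S"
  shows "is_cat (glue_cat B S)"
  unfolding is_cat_def
  by (simp add: glue_cat_arr_laws[OF assms] glue_cat_id_laws[OF assms] glue_cat_comp_laws[OF assms]
      glue_cat_comp_assoc[OF assms])

lemma glue_inj_is_functor:
  assumes B: "is_cat B" and up: "upward_closed B S"
  shows "is_functor B (glue_cat B S) (glue_obj S s) (glue_arr B S s)"
  unfolding is_functor_def
  using B glue_cat_is_cat[OF B up] glue_obj_in_glue_cat glue_arr_in_glue_cat
    glue_cat_cod[OF up] glue_cat_id[OF B] glue_cat_comp[OF B]
  by auto

lemma glue_inj_cosieve:
  assumes B: "is_cat B" and up: "upward_closed B S"
  shows "cosieve B (glue_cat B S) (glue_obj S s) (glue_arr B S s)"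
  unfolding cosieve_def discrete_opfibration_def
proof (intro conjI ballI impI glue_inj_is_functor[OF B up])
  fix x X assume x: "x \<in> cObj B" and "X \<in> cArr (glue_cat B S)"
    and dX: "cDom (glue_cat B S) X = glue_obj S s x"
  then obtain t b where X: "X = glue_arr B S t b" "b \<in> cArr B" by (metis glue_cat_arrE)
  have "glue_obj S t (cDom B b) = glue_obj S s x" using dX X by simp
  then have "cDom B b = x" and "s = t \<or> x \<in> S" by (auto simp: glue_obj_eq_iff)
  then have "cDom B b = x" "glue_arr B S s b = X" using X(1) by (auto simp: glue_arr_eq_iff)
  then show "\<exists>!b. b \<in> cArr B \<and> cDom B b = x \<and> glue_arr B S s b = X"
    using X(2) by (auto simp: glue_arr_eq_iff)
next
  show "inj_on (glue_obj S s) (cObj B)" by (auto intro: inj_onI simp: glue_obj_eq_iff)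
qed

definition glue_copair_obj :: "('ob \<Rightarrow> 'oc) \<Rightarrow> ('ob \<Rightarrow> 'oc) \<Rightarrow> ('ob + 'ob) set \<Rightarrow> 'oc" where
  "glue_copair_obj J1 J2 Y = (case unglue_obj Y of (s, y) \<Rightarrow> if s then J1 y else J2 y)"

definition glue_copair_arr :: "('ab \<Rightarrow> 'ac) \<Rightarrow> ('ab \<Rightarrow> 'ac) \<Rightarrow> ('ab + 'ab) list set \<Rightarrow> 'ac" where
  "glue_copair_arr J1 J2 X = (case unglue_arr X of (s, b) \<Rightarrow> if s then J1 b else J2 b)"

lemma glue_copair_obj_glue_obj:
  "\<forall>y\<in>S. J1 y = J2 y \<Longrightarrow> glue_copair_obj J1 J2 (glue_obj S s y) = (if s then J1 y else J2 y)"
  unfolding glue_copair_obj_def by auto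

lemma glue_copair_arr_glue_arr:
  "\<forall>b\<in>cArr B. cDom B b \<in> S \<longrightarrow> J1 b = J2 b \<Longrightarrow> b \<in> cArr B \<Longrightarrow>
    glue_copair_arr J1 J2 (glue_arr B S s b) = (if s then J1 b else J2 b)"
  unfolding glue_copair_arr_def by auto

lemma glue_copair_is_functor:
  assumes B: "is_cat B" and up: "upward_closed B S"
    and J1: "is_functor B C J1o J1a" and J2: "is_functor B C J2o J2a"
    and agree_obj: "\<forall>y\<in>S. J1o y = J2o y"
    and agree_arr: "\<forall>b\<in>cArr B. cDom B b \<in> S \<longrightarrow> J1a b = J2a b"
  shows "is_functor (glue_cat B S) C (glue_copair_obj J1o J2o) (glue_copair_arr J1a J2a)"
proof -
  note copair = glue_copair_obj_glue_obj[OF agree_obj] glue_copair_arr_glue_arr[OF agree_arr]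
  show ?thesis
    unfolding is_functor_def
  proof (intro conjI ballI impI image_subsetI glue_cat_is_cat[OF B up] is_functorD(2)[OF J1])
    fix Y assume "Y \<in> cObj (glue_cat B S)"
    then obtain s y where "Y = glue_obj S s y" "y \<in> cObj B" by (rule glue_cat_objE)
    then show "glue_copair_obj J1o J2o Y \<in> cObj C"
      using copair is_functorD(3)[OF J1] is_functorD(3)[OF J2] by simp
  next
    fix X assume "X \<in> cArr (glue_cat B S)"
    then obtain s b where "X = glue_arr B S s b" "b \<in> cArr B" by (rule glue_cat_arrE)
    then show "glue_copair_arr J1a J2a X \<in> cArr C"
      using copair is_functorD(4)[OF J1] is_functorD(4)[OF J2] by simp
  next
    fix X assume "X \<in> cArr (glue_cat B S)"
    then obtain s b where X: "X = glue_arr B S s b" "b \<in> cArr B" by (rule glue_cat_arrE)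
    then show "cDom C (glue_copair_arr J1a J2a X) = glue_copair_obj J1o J2o (cDom (glue_cat B S) X)"
      "cCod C (glue_copair_arr J1a J2a X) = glue_copair_obj J1o J2o (cCod (glue_cat B S) X)"
      using copair is_functorD(5,6)[OF J1 X(2)] is_functorD(5,6)[OF J2 X(2)] glue_cat_cod[OF up X(2)]
      by simp_all
  next
    fix Y assume "Y \<in> cObj (glue_cat B S)"
    then obtain s y where Y: "Y = glue_obj S s y" "y \<in> cObj B" by (rule glue_cat_objE)
    then show "glue_copair_arr J1a J2a (cId (glue_cat B S) Y) = cId C (glue_copair_obj J1o J2o Y)"
      using copair glue_cat_id[OF B Y(2)] is_catD(3)[OF B Y(2)]
        is_functorD(7)[OF J1 Y(2)] is_functorD(7)[OF J2 Y(2)] by simp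
  next
    fix X1 X2 assume "X1 \<in> cArr (glue_cat B S)" "X2 \<in> cArr (glue_cat B S)"
      "cCod (glue_cat B S) X1 = cDom (glue_cat B S) X2"
    then obtain s f g where X: "X1 = glue_arr B S s f" "X2 = glue_arr B S s g"
      and fg: "f \<in> cArr B" "g \<in> cArr B" "cCod B f = cDom B g"
      by (rule glue_cat_composableE[OF up])
    then show "glue_copair_arr J1a J2a (cComp (glue_cat B S) X2 X1) =
        cComp C (glue_copair_arr J1a J2a X2) (glue_copair_arr J1a J2a X1)"
      using copair glue_cat_comp[OF B fg] is_catD(6)[OF B fg]
        is_functorD(8)[OF J1 fg] is_functorD(8)[OF J2 fg] by simp
  qed
qed

lemma glue_injs_coequalize:
  assumes F: "is_functor A B Fo Fa" and "Fo ` cObj A \<subseteq> S"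
  shows "functors_agree A (glue_obj S True \<circ> Fo) (glue_arr B S True \<circ> Fa)
                          (glue_obj S False \<circ> Fo) (glue_arr B S False \<circ> Fa)"
  unfolding functors_agree_def
proof (intro conjI ballI)
  fix x assume "x \<in> cObj A"
  then show "(glue_obj S True \<circ> Fo) x = (glue_obj S False \<circ> Fo) x"
    using assms(2) glue_obj_tag_irrelevant[of "Fo x" S True False] by auto
next
  fix a assume "a \<in> cArr A"
  then have "cDom B (Fa a) \<in> S"
    using assms(2) is_functorD(5)[OF F] is_catD(1)[OF is_functorD(1)[OF F]] by auto
  then show "(glue_arr B S True \<circ> Fa) a = (glue_arr B S False \<circ> Fa) a"
    using glue_arr_tag_irrelevant[of B "Fa a" S True False] by simp
qed

lemma cokernel_pair_of_lens_embeds_in_glue: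
  assumes lens: "is_lens A B Fo Fa pF" and cok: "is_cokernel_pair A B C Fo Fa J1o J1a J2o J2a"
  defines "S \<equiv> Fo ` cObj A"
  obtains Ho Ha where "is_functor C (glue_cat B S) Ho Ha" "inj_on Ha (cArr C)"
    "functors_agree B (Ho \<circ> J1o) (Ha \<circ> J1a) (glue_obj S True) (glue_arr B S True)"
    "functors_agree B (Ho \<circ> J2o) (Ha \<circ> J2a) (glue_obj S False) (glue_arr B S False)"
proof -
  note F = is_lens_is_functor[OF lens]
  note B = is_functorD(2)[OF F]
  have up: "upward_closed B S" unfolding S_def by (rule lens_image_upward_closed[OF lens])
  note J1 = is_cokernel_pairD(1)[OF cok] and J2 = is_cokernel_pairD(2)[OF cok]
    and agree = is_cokernel_pairD(3)[OF cok]
  have univ_self: "pushout_univ_for A B C C Fo Fa J1o J1a J2o J2a"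
    and univ_glue: "pushout_univ_for A B C (glue_cat B S) Fo Fa J1o J1a J2o J2a"
    using cok unfolding is_cokernel_pair_def by blast+
  have injs_agree: "functors_agree A (glue_obj S True \<circ> Fo) (glue_arr B S True \<circ> Fa)
                                    (glue_obj S False \<circ> Fo) (glue_arr B S False \<circ> Fa)"
    by (rule glue_injs_coequalize[OF F]) (simp add: S_def)
  obtain Ho Ha where H: "is_functor C (glue_cat B S) Ho Ha"
    and HJ1: "functors_agree B (Ho \<circ> J1o) (Ha \<circ> J1a) (glue_obj S True) (glue_arr B S True)"
    and HJ2: "functors_agree B (Ho \<circ> J2o) (Ha \<circ> J2a) (glue_obj S False) (glue_arr B S False)"
    by (rule pushout_univ_forE[OF univ_glue glue_inj_is_functor[OF B up] glue_inj_is_functor[OF B up]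
        injs_agree])
  note agree_on_S = lens_coequalized_agree_on_image[OF lens agree, folded S_def]
  let ?Go = "glue_copair_obj J1o J2o" and ?Ga = "glue_copair_arr J1a J2a"
  have "functors_agree C (?Go \<circ> Ho) (?Ga \<circ> Ha) id id"
  proof (rule pushout_univ_for_endo_agrees_id[OF univ_self J1 J2 agree])
    show "is_functor C C (?Go \<circ> Ho) (?Ga \<circ> Ha)"
      using comp_is_functor[OF H glue_copair_is_functor[OF B up J1 J2 agree_on_S]] .
    show "functors_agree B (?Go \<circ> Ho \<circ> J1o) (?Ga \<circ> Ha \<circ> J1a) J1o J1a"
      "functors_agree B (?Go \<circ> Ho \<circ> J2o) (?Ga \<circ> Ha \<circ> J2a) J2o J2a"
      using HJ1 HJ2 glue_copair_obj_glue_obj[OF agree_on_S(1)] glue_copair_arr_glue_arr[OF agree_on_S(2)]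
      unfolding functors_agree_def by simp_all
  qed
  then have "inj_on Ha (cArr C)"
    by (intro inj_on_inverseI[where g = ?Ga]) (simp add: functors_agree_def)
  then show thesis using that H HJ1 HJ2 by blast
qed

theorem proposition3p9:
  fixes A :: "('oa, 'aa) cat" and B :: "('ob, 'ab) cat" and C :: "('oc, 'ac) cat"
    and Fo :: "'oa \<Rightarrow> 'ob" and Fa :: "'aa \<Rightarrow> 'ab" and pF :: "'oa \<Rightarrow> 'ab \<Rightarrow> 'aa"
    and J1o J2o :: "'ob \<Rightarrow> 'oc" and J1a J2a :: "'ab \<Rightarrow> 'ac"
  assumes lensF: "is_lens A B Fo Fa pF"
    and cok: "is_cokernel_pair A B C Fo Fa J1o J1a J2o J2a"
  shows "cosieve B C J1o J1a \<and> cosieve B C J2o J2a \<and>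
    (\<forall>p1 p2. is_lens B C J1o J1a p1 \<and> is_lens B C J2o J2a p2 \<longrightarrow>
       lenses_eq A C (J1o \<circ> Fo) (J1a \<circ> Fa) (lens_comp_put Fo pF p1)
                     (J2o \<circ> Fo) (J2a \<circ> Fa) (lens_comp_put Fo pF p2))"
proof -
  define S where "S = Fo ` cObj A"
  obtain Ho Ha where H: "is_functor C (glue_cat B S) Ho Ha" and inj: "inj_on Ha (cArr C)"
    and HJ1: "functors_agree B (Ho \<circ> J1o) (Ha \<circ> J1a) (glue_obj S True) (glue_arr B S True)"
    and HJ2: "functors_agree B (Ho \<circ> J2o) (Ha \<circ> J2a) (glue_obj S False) (glue_arr B S False)"
    using cokernel_pair_of_lens_embeds_in_glue[OF lensF cok] unfolding S_def by blast
  note F = is_lens_is_functor[OF lensF]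
  have up: "upward_closed B S" unfolding S_def by (rule lens_image_upward_closed[OF lensF])
  note glue_cosieve = glue_inj_cosieve[OF is_functorD(2)[OF F] up]
  have "cosieve B C J1o J1a" "cosieve B C J2o J2a"
    using cosieve_if_comp_cosieve[OF is_cokernel_pairD(1)[OF cok] H inj HJ1 glue_cosieve]
      cosieve_if_comp_cosieve[OF is_cokernel_pairD(2)[OF cok] H inj HJ2 glue_cosieve] .
  moreover have "b = b'" if "b \<in> cArr B" "b' \<in> cArr B" "J1a b = J2a b'" for b b'
  proof -
    have "glue_arr B S True b = glue_arr B S False b'"
      using HJ1 HJ2 that unfolding functors_agree_def by (metis comp_apply)
    then show ?thesis by (simp add: glue_arr_eq_iff)
  qed
  ultimately show ?thesis using lenses_eq_compI[OF F is_cokernel_pairD(3)[OF cok]] by blast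
qed

end
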